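(* Let $t$ be any variable-free $\mathcal{L}$-term and let $s$ be the sequence that is the interpretation of $t$ in the standard structure $\mathfrak{S}$. Then $\mathsf{WSeq}_2 \vdash t = \overline{s}$, where $\mathsf{WSeq}_2$ denotes the axiom scheme $\overline{(s_1,\ldots,s_n)}\circ\overline{(t_1,\ldots,t_m)} = \overline{(s_1,\ldots,s_n,t_1,\ldots,t_m)}$ for all sequences $(s_1,\ldots,s_n)$ and $(t_1,\ldots,t_m)$ (with $n,m\ge 0$).
   Context: $\mathcal{L}$ is the first-order language $\{e, \vdash, \circ\}$ with $e$ a constant symbol and $\vdash$ (written infix, $x\vdash y$), $\circ$ binary function symbols. Sequences are defined inductively: the empty sequence $()$ is a sequence, and for $n>0$, if $s_1,\ldots,s_n$ are sequences then $(s_1,\ldots,s_n)$ is a sequence. The standard structure $\mathfrak{S}$ has the set of all sequences as universe, $e^{\mathfrak{S}}=()$, $(s_1,\ldots,s_n)\vdash^{\mathfrak{S}} t = (s_1,\ldots,s_n,t)$ (appending $t$ as a new last element), and $(s_1,\ldots,s_n)\circ^{\mathfrak{S}}(t_1,\ldots,t_m)=(s_1,\ldots,s_n,t_1,\ldots,t_m)$ (concatenation). For a sequence $s$, the sequeral $\overline{s}$ is the variable-free term defined by $\overline{()}=e$ and $\overline{(s_1,\ldots,s_n)} = (\ldots((e\vdash \overline{s_1})\vdash\overline{s_2})\ldots)\vdash\overline{s_n}$. *)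

theory Defs
  imports Main
begin

datatype sq = Sq "sq list"

text \<open>Variable-free terms of the language {e, \<turnstile>, \<circ>}.\<close>
datatype tm = E | Ap tm tm | Cat tm tm

fun ev :: "tm \<Rightarrow> sq" where
  "ev E = Sq []"
| "ev (Ap a b) = (case ev a of Sq xs \<Rightarrow> Sq (xs @ [ev b]))"
| "ev (Cat a b) = (case ev a of Sq xs \<Rightarrow> (case ev b of Sq ys \<Rightarrow> Sq (xs @ ys)))"

fun numeral_sq :: "sq \<Rightarrow> tm" where
  "numeral_sq (Sq xs) = foldl Ap E (map numeral_sq xs)"

definition WSeq2 :: "(tm \<times> tm) set" where
  "WSeq2 = {(Cat (numeral_sq (Sq xs)) (numeral_sq (Sq ys)), numeral_sq (Sq (xs @ ys))) | xs ys. True}"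

text \<open>Derivability of a closed equation t = u from a set of closed equational axioms
  in first-order logic with equality (equational calculus: axioms, reflexivity,
  symmetry, transitivity, congruence for the function symbols).\<close>
inductive derives :: "(tm \<times> tm) set \<Rightarrow> tm \<Rightarrow> tm \<Rightarrow> bool" for Ax where
  ax: "(t, u) \<in> Ax \<Longrightarrow> derives Ax t u"
| refl: "derives Ax t t"
| sym: "derives Ax t u \<Longrightarrow> derives Ax u t"
| trans: "derives Ax t u \<Longrightarrow> derives Ax u v \<Longrightarrow> derives Ax t v"
| cong_Ap: "derives Ax t1 u1 \<Longrightarrow> derives Ax t2 u2 \<Longrightarrow> derives Ax (Ap t1 t2) (Ap u1 u2)"
| cong_Cat: "derives Ax t1 u1 \<Longrightarrow> derives Ax t2 u2 \<Longrightarrow> derives Ax (Cat t1 t2) (Cat u1 u2)"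

end

theory Submission
  imports Defs
begin

(* For t = a \<turnstile> b congruence suffices, because the sequeral of a
   sequence extended by one element is literally the sequeral of the shorter sequence
   with \<turnstile> applied; for t = a \<circ> b one instance of WSeq2 closes the gap. *)

lemma numeral_sq_snoc:
  "numeral_sq (Sq (xs @ [x])) = Ap (numeral_sq (Sq xs)) (numeral_sq x)"
  by simp

lemma derives_WSeq2_Cat_numeral_sq:
  "derives WSeq2 (Cat (numeral_sq (Sq xs)) (numeral_sq (Sq ys))) (numeral_sq (Sq (xs @ ys)))"
  by (rule derives.ax) (auto simp: WSeq2_def)

lemma derives_WSeq2_numeral_sq_ev: "derives WSeq2 t (numeral_sq (ev t))"
proof (induction t)
  case E
  show ?case by (simp add: derives.refl)
next
  case (Ap a b)
  obtain xs where xs: "ev a = Sq xs" by (cases "ev a")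
  have "derives WSeq2 (Ap a b) (Ap (numeral_sq (Sq xs)) (numeral_sq (ev b)))"
    using Ap xs by (simp add: derives.cong_Ap)
  then show ?case
    using xs by (simp only: ev.simps sq.case numeral_sq_snoc)
next
  case (Cat a b)
  obtain xs where xs: "ev a = Sq xs" by (cases "ev a")
  obtain ys where ys: "ev b = Sq ys" by (cases "ev b")
  have "derives WSeq2 (Cat a b) (Cat (numeral_sq (Sq xs)) (numeral_sq (Sq ys)))"
    using Cat xs ys by (simp add: derives.cong_Cat)
  then have "derives WSeq2 (Cat a b) (numeral_sq (Sq (xs @ ys)))"
    using derives_WSeq2_Cat_numeral_sq by (rule derives.trans)
  then show ?case
    using xs ys by simp
qed

theorem lemma1:
  fixes t :: tm and s :: sq
  assumes "ev t = s"
  shows "derives WSeq2 t (numeral_sq s)"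
  using derives_WSeq2_numeral_sq_ev assms by blast

end
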